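(* Let $(\rho_k)_k$ be a real sequence with $\lim_{k\to\infty}\rho_k=0$, and let $(\lambda_k)_k$ be any sequence in $\mathbb{R}\setminus\{0\}$. Then for every $F\in C^*(G)$, $$\lim_{k\to\infty}\|\pi_{\rho_k,\lambda_k}(F)-\pi_{0,\lambda_k}(F)\|=0.$$
   Context: $G$ (Boidol's group) is $\mathbb{R}^4$ with product $(t,x,y,z)\cdot(t',x',y',z')=(t+t',\,e^{t'}x+x',\,e^{-t'}y+y',\,z+z'+\tfrac12(e^{t'}xy'-e^{-t'}x'y))$, Haar measure $dt\,dx\,dy\,dz$, group C*-algebra $C^*(G)$; representations extend to $C^*(G)$ by $\pi(F)=\int_G F(g)\pi(g)dg$. For $\rho\in\mathbb{R},\lambda\neq0$, $\pi_{\rho,\lambda}$ is the unitary representation on $L^2(\mathbb{R})$ given by $\pi_{\rho,\lambda}(t,x,y,z)\xi(u)=e^{t/2}e^{-i\rho t}e^{-i\lambda z}e^{-i\lambda xy/2}e^{i\lambda e^tyu}\xi(e^tu-x)$. *)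

theory Defs
  imports "HOL-Analysis.Analysis"
begin

text \<open>Boidol's group G = R^4, elements written (t,x,y,z); Haar measure = Lebesgue measure
  dt dx dy dz, i.e. lborel on real \<times> real \<times> real \<times> real.\<close>

type_synonym grp = "real \<times> real \<times> real \<times> real"

definition boidol_mult :: "grp \<Rightarrow> grp \<Rightarrow> grp" where
  "boidol_mult = (\<lambda>(t,x,y,z) (t',x',y',z').
     (t + t', exp t' * x + x', exp (- t') * y + y',
      z + z' + (exp t' * x * y' - exp (- t') * x' * y) / 2))"

definition pi_act :: "real \<Rightarrow> real \<Rightarrow> grp \<Rightarrow> (real \<Rightarrow> complex) \<Rightarrow> real \<Rightarrow> complex" where
  "pi_act \<rho> lam g \<xi> u = (case g of (t,x,y,z) \<Rightarrow>
     complex_of_real (exp (t / 2))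
     * cis (- \<rho> * t - lam * z - lam * x * y / 2 + lam * exp t * y * u)
     * \<xi> (exp t * u - x))"

definition pi_op :: "real \<Rightarrow> real \<Rightarrow> (grp \<Rightarrow> complex) \<Rightarrow> (real \<Rightarrow> complex) \<Rightarrow> real \<Rightarrow> complex" where
  "pi_op \<rho> lam F \<xi> u = (\<integral>g. F g * pi_act \<rho> lam g \<xi> u \<partial>lborel)"

definition square_integrable :: "(real \<Rightarrow> complex) \<Rightarrow> bool" where
  "square_integrable \<xi> \<longleftrightarrow> \<xi> \<in> borel_measurable lborel \<and> integrable lborel (\<lambda>u. (cmod (\<xi> u))\<^sup>2)"

definition l2norm :: "(real \<Rightarrow> complex) \<Rightarrow> real" where
  "l2norm \<xi> = sqrt (\<integral>u. (cmod (\<xi> u))\<^sup>2 \<partial>lborel)"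

definition op_norm :: "((real \<Rightarrow> complex) \<Rightarrow> (real \<Rightarrow> complex)) \<Rightarrow> real" where
  "op_norm T = Sup ((\<lambda>\<xi>. l2norm (T \<xi>)) ` {\<xi>. square_integrable \<xi> \<and> l2norm \<xi> \<le> 1})"

end

theory Submission
  imports Defs
begin

text \<open>
  Since \<pi>_{\<rho>,\<lambda>}(t,x,y,z) = e^{-i\<rho>t} \<pi>_{0,\<lambda>}(t,x,y,z), the difference
  \<pi>_{\<rho>,\<lambda>}(F) - \<pi>_{0,\<lambda>}(F) is \<pi>_{0,\<lambda>} applied to F(t,x,y,z) (e^{-i\<rho>t} - 1).
  Every integrated representation satisfies \<parallel>\<pi>_{\<rho>,\<lambda>}(H)\<parallel> \<le> \<parallel>H\<parallel>_1 (Cauchy-Schwarz in g,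
  Tonelli, and unitarity of each \<pi>_{\<rho>,\<lambda>}(g)), so by dominated convergence the operator norm
  of the difference tends to 0 as \<rho> \<rightarrow> 0, uniformly in \<lambda>, for each integrable F.
  An element of C*(G) is given as a sequence of integrable functions F_n that is Cauchy for
  the norm sup_{\<rho>,\<lambda>} \<parallel>\<pi>_{\<rho>,\<lambda>}(-)\<parallel>; hence the norms of the differences converge in n
  uniformly in k, and the limits in n and in k can be exchanged.
\<close>

section \<open>L^1 norms, L^2 norms and operator norms\<close>

definition L1_norm :: "(grp \<Rightarrow> complex) \<Rightarrow> real" where
  "L1_norm F = (\<integral>g. cmod (F g) \<partial>lborel)"

lemma L1_norm_nonneg: "0 \<le> L1_norm F"
  by (simp add: L1_norm_def)

lemma nn_integral_norm_eq_L1_norm: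
  "integrable lborel F \<Longrightarrow> (\<integral>\<^sup>+g. ennreal (cmod (F g)) \<partial>lborel) = ennreal (L1_norm F)"
  by (simp add: L1_norm_def nn_integral_eq_integral)

lemma l2norm_nonneg: "0 \<le> l2norm \<xi>"
  by (simp add: l2norm_def)

lemma l2norm_square: "(l2norm f)\<^sup>2 = (\<integral>u. (cmod (f u))\<^sup>2 \<partial>lborel)"
  by (simp add: l2norm_def)

lemma nn_integral_square_eq_l2norm:
  "square_integrable \<xi> \<Longrightarrow> (\<integral>\<^sup>+u. ennreal ((cmod (\<xi> u))\<^sup>2) \<partial>lborel) = ennreal ((l2norm \<xi>)\<^sup>2)"
  by (simp add: square_integrable_def l2norm_def nn_integral_eq_integral)

lemma norm_add_squared_le:
  fixes z w :: "'a::real_normed_vector"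
  assumes "0 < a" "0 < b"
  shows "(norm (z + w))\<^sup>2 \<le> (1 + b / a) * (norm z)\<^sup>2 + (1 + a / b) * (norm w)\<^sup>2"
proof -
  have "0 \<le> (b * norm z - a * norm w)\<^sup>2 / (a * b)"
    using assms by simp
  also have "\<dots> = b / a * (norm z)\<^sup>2 + a / b * (norm w)\<^sup>2 - 2 * norm z * norm w"
    using assms by (simp add: field_simps power2_eq_square)
  finally have "(norm z + norm w)\<^sup>2 \<le> (1 + b / a) * (norm z)\<^sup>2 + (1 + a / b) * (norm w)\<^sup>2"
    by (simp add: power2_eq_square algebra_simps)
  moreover have "(norm (z + w))\<^sup>2 \<le> (norm z + norm w)\<^sup>2"
    by (intro power_mono norm_triangle_ineq) simp
  ultimately show ?thesis by linarith
qed

lemma square_integrable_add: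
  assumes "square_integrable f" "square_integrable g"
  shows "square_integrable (\<lambda>u. f u + g u)"
proof -
  have [measurable]: "f \<in> borel_measurable borel" "g \<in> borel_measurable borel"
    using assms by (simp_all add: square_integrable_def)
  have "integrable lborel (\<lambda>u. (cmod (f u + g u))\<^sup>2)"
  proof (rule Bochner_Integration.integrable_bound)
    show "integrable lborel (\<lambda>u. 2 * (cmod (f u))\<^sup>2 + 2 * (cmod (g u))\<^sup>2)"
      using assms by (simp add: square_integrable_def)
    show "(\<lambda>u. (cmod (f u + g u))\<^sup>2) \<in> borel_measurable lborel"
      by measurable
    show "AE u in lborel. norm ((cmod (f u + g u))\<^sup>2) \<le> norm (2 * (cmod (f u))\<^sup>2 + 2 * (cmod (g u))\<^sup>2)"
      using norm_add_squared_le[of 1 1 "f u" "g u" for u] by auto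
  qed
  then show ?thesis by (simp add: square_integrable_def)
qed

lemma l2norm_add_le:
  assumes f: "square_integrable f" and g: "square_integrable g"
  shows "l2norm (\<lambda>u. f u + g u) \<le> l2norm f + l2norm g"
proof (rule field_le_epsilon)
  fix e :: real
  assume "0 < e"
  \<comment> \<open>With a = \<parallel>f\<parallel> + e/2 and b = \<parallel>g\<parallel> + e/2 the weighted bound integrates to (a + b)^2.\<close>
  define a where "a = l2norm f + e / 2"
  define b where "b = l2norm g + e / 2"
  have ab: "0 < a" "0 < b"
    using \<open>0 < e\<close> by (simp_all add: a_def b_def add_nonneg_pos l2norm_nonneg)
  have fi: "integrable lborel (\<lambda>u. (cmod (f u))\<^sup>2)" and gi: "integrable lborel (\<lambda>u. (cmod (g u))\<^sup>2)"
    using f g by (simp_all add: square_integrable_def)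
  have "(l2norm (\<lambda>u. f u + g u))\<^sup>2 = (\<integral>u. (cmod (f u + g u))\<^sup>2 \<partial>lborel)"
    by (rule l2norm_square)
  also have "\<dots> \<le> (\<integral>u. (1 + b / a) * (cmod (f u))\<^sup>2 + (1 + a / b) * (cmod (g u))\<^sup>2 \<partial>lborel)"
    using square_integrable_add[OF f g] fi gi
    by (intro integral_mono norm_add_squared_le ab) (simp_all add: square_integrable_def)
  also have "\<dots> = (1 + b / a) * (l2norm f)\<^sup>2 + (1 + a / b) * (l2norm g)\<^sup>2"
    using fi gi by (simp add: l2norm_square)
  also have "\<dots> \<le> (1 + b / a) * a\<^sup>2 + (1 + a / b) * b\<^sup>2"
    using ab \<open>0 < e\<close>
    by (intro add_mono mult_left_mono power_mono) (simp_all add: a_def b_def l2norm_nonneg)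
  also have "\<dots> = (a + b)\<^sup>2"
    using ab by (simp add: field_simps power2_eq_square)
  finally have "l2norm (\<lambda>u. f u + g u) \<le> a + b"
    by (rule power2_le_imp_le) (use ab in simp)
  then show "l2norm (\<lambda>u. f u + g u) \<le> l2norm f + l2norm g + e"
    by (simp add: a_def b_def)
qed

lemma square_integrable_uminus [simp]: "square_integrable (\<lambda>u. - f u) \<longleftrightarrow> square_integrable f"
  by (simp add: square_integrable_def)

lemma l2norm_uminus [simp]: "l2norm (\<lambda>u. - f u) = l2norm f"
  by (simp add: l2norm_def)

lemma square_integrable_diff:
  "square_integrable f \<Longrightarrow> square_integrable g \<Longrightarrow> square_integrable (\<lambda>u. f u - g u)"
  using square_integrable_add[of f "\<lambda>u. - g u"] by simp

lemma l2norm_diff_le: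
  "square_integrable f \<Longrightarrow> square_integrable g \<Longrightarrow> l2norm (\<lambda>u. f u - g u) \<le> l2norm f + l2norm g"
  using l2norm_add_le[of f "\<lambda>u. - g u"] by simp

lemma l2norm_cong_AE:
  assumes "square_integrable f" "square_integrable g" "AE u in lborel. f u = g u"
  shows "l2norm f = l2norm g"
proof -
  have [measurable]: "f \<in> borel_measurable borel" "g \<in> borel_measurable borel"
    using assms by (simp_all add: square_integrable_def)
  have "(\<integral>u. (cmod (f u))\<^sup>2 \<partial>lborel) = (\<integral>u. (cmod (g u))\<^sup>2 \<partial>lborel)"
    using assms(3) by (intro integral_cong_AE) (auto elim: AE_mp)
  then show ?thesis by (simp add: l2norm_def)
qed

lemma op_norm_le:
  assumes "\<And>\<xi>. square_integrable \<xi> \<Longrightarrow> l2norm \<xi> \<le> 1 \<Longrightarrow> l2norm (T \<xi>) \<le> B"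
  shows "op_norm T \<le> B"
proof -
  have "(\<lambda>_. 0) \<in> {\<xi>. square_integrable \<xi> \<and> l2norm \<xi> \<le> 1}"
    by (simp add: square_integrable_def l2norm_def)
  then show ?thesis
    unfolding op_norm_def by (intro cSUP_least) (auto intro: assms)
qed

lemma l2norm_le_op_norm:
  assumes bounded: "\<And>\<eta>. square_integrable \<eta> \<Longrightarrow> l2norm (T \<eta>) \<le> C * l2norm \<eta>"
    and "square_integrable \<xi>" "l2norm \<xi> \<le> 1"
  shows "l2norm (T \<xi>) \<le> op_norm T"
  unfolding op_norm_def
proof (rule cSUP_upper)
  have "l2norm (T \<eta>) \<le> \<bar>C\<bar>" if "square_integrable \<eta>" "l2norm \<eta> \<le> 1" for \<eta>
  proof -
    have "C * l2norm \<eta> \<le> \<bar>C\<bar> * 1"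
      by (intro order_trans[OF abs_ge_self[of "C * l2norm \<eta>"]])
      (simp add: abs_mult l2norm_nonneg mult_left_le that)
    with bounded[OF that(1)] show ?thesis by simp
  qed
  then show "bdd_above ((\<lambda>\<eta>. l2norm (T \<eta>)) ` {\<eta>. square_integrable \<eta> \<and> l2norm \<eta> \<le> 1})"
    by (intro bdd_aboveI2) auto
qed (use assms in auto)

lemma op_norm_nonneg:
  assumes "\<And>\<eta>. square_integrable \<eta> \<Longrightarrow> l2norm (T \<eta>) \<le> C * l2norm \<eta>"
  shows "0 \<le> op_norm T"
proof -
  have "square_integrable (\<lambda>_. 0)" "l2norm (\<lambda>_. 0) \<le> 1"
    by (simp_all add: square_integrable_def l2norm_def)
  then show ?thesis
    using l2norm_le_op_norm[OF assms] l2norm_nonneg order_trans by blast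
qed

section \<open>The representations and their integrated forms\<close>

lemma pi_act_eq:
  "pi_act \<rho> lam g \<xi> u = complex_of_real (exp (fst g / 2))
     * cis (- \<rho> * fst g - lam * snd (snd (snd g)) - lam * fst (snd g) * fst (snd (snd g)) / 2
            + lam * exp (fst g) * fst (snd (snd g)) * u)
     * \<xi> (exp (fst g) * u - fst (snd g))"
  by (cases g) (simp add: pi_act_def)

lemma pi_act_twist: "pi_act \<rho> lam g \<xi> u = cis (- \<rho> * fst g) * pi_act 0 lam g \<xi> u"
  by (simp add: pi_act_eq cis_mult algebra_simps)

lemma pi_op_twist: "pi_op \<rho> lam F = pi_op 0 lam (\<lambda>g. F g * cis (- \<rho> * fst g))"
  by (intro ext) (simp add: pi_op_def pi_act_twist[of \<rho>] mult_ac)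

lemma norm_pi_act:
  "cmod (pi_act \<rho> lam g \<xi> u) = exp (fst g / 2) * cmod (\<xi> (exp (fst g) * u - fst (snd g)))"
  by (simp add: pi_act_eq norm_mult)

lemma pi_act_integrand_measurable:
  assumes "\<xi> \<in> borel_measurable borel" "F \<in> borel_measurable borel"
  shows "(\<lambda>(u, g). F g * pi_act \<rho> lam g \<xi> u) \<in> borel_measurable (lborel \<Otimes>\<^sub>M lborel)"
  unfolding pi_act_eq lborel_prod measurable_lborel2 split_beta
  by (intro borel_measurable_times measurable_compose[OF _ assms(1)] measurable_compose[OF _ assms(2)]
      borel_measurable_continuous_onI continuous_intros) simp_all

lemma nn_integral_norm_pi_act_square:
  assumes "\<xi> \<in> borel_measurable borel"
  shows "(\<integral>\<^sup>+u. ennreal ((cmod (pi_act \<rho> lam g \<xi> u))\<^sup>2) \<partial>lborel)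
    = (\<integral>\<^sup>+v. ennreal ((cmod (\<xi> v))\<^sup>2) \<partial>lborel)"
proof -
  have [measurable]: "\<xi> \<in> borel_measurable borel" by (fact assms)
  have "(\<integral>\<^sup>+v. ennreal ((cmod (\<xi> v))\<^sup>2) \<partial>lborel)
      = \<bar>exp (fst g)\<bar> * (\<integral>\<^sup>+u. ennreal ((cmod (\<xi> (- fst (snd g) + exp (fst g) * u)))\<^sup>2) \<partial>lborel)"
    by (rule nn_integral_real_affine) auto
  also have "\<dots> = (\<integral>\<^sup>+u. ennreal ((cmod (pi_act \<rho> lam g \<xi> u))\<^sup>2) \<partial>lborel)"
    by (subst nn_integral_cmult[symmetric])
      (auto intro!: nn_integral_cong
        simp: norm_pi_act power_mult_distrib ennreal_mult[symmetric] exp_double[symmetric])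
  finally show ?thesis ..
qed

lemma nn_integral_pi_act_Cauchy_Schwarz:
  assumes \<xi>: "\<xi> \<in> borel_measurable borel" and [measurable]: "F \<in> borel_measurable borel"
  shows "(\<integral>\<^sup>+g. ennreal (cmod (F g * pi_act \<rho> lam g \<xi> u)) \<partial>lborel)\<^sup>2
    \<le> (\<integral>\<^sup>+g. ennreal (cmod (F g)) \<partial>lborel)
      * (\<integral>\<^sup>+g. ennreal (cmod (F g) * (cmod (pi_act \<rho> lam g \<xi> u))\<^sup>2) \<partial>lborel)"
proof -
  have [measurable]: "(\<lambda>g. pi_act \<rho> lam g \<xi> u) \<in> borel_measurable lborel"
    using measurable_Pair2[OF pi_act_integrand_measurable[OF \<xi>, of "\<lambda>_. 1"], of u] by simp
  have "(\<lambda>g. ennreal (sqrt (cmod (F g)))) \<in> borel_measurable lborel"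
    "(\<lambda>g. ennreal (sqrt (cmod (F g)) * cmod (pi_act \<rho> lam g \<xi> u))) \<in> borel_measurable lborel"
    by measurable
  from Cauchy_Schwarz_nn_integral[OF this] show ?thesis
    by (simp add: norm_mult ennreal_mult[symmetric] ennreal_power power_mult_distrib mult.assoc[symmetric])
qed

lemma mixed_norm_pi_act_integrand_le:
  assumes \<xi>: "\<xi> \<in> borel_measurable borel" and F [measurable]: "F \<in> borel_measurable borel"
  shows "(\<integral>\<^sup>+u. (\<integral>\<^sup>+g. ennreal (cmod (F g * pi_act \<rho> lam g \<xi> u)) \<partial>lborel)\<^sup>2 \<partial>lborel)
     \<le> (\<integral>\<^sup>+g. ennreal (cmod (F g)) \<partial>lborel)\<^sup>2 * (\<integral>\<^sup>+v. ennreal ((cmod (\<xi> v))\<^sup>2) \<partial>lborel)"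
proof -
  define A where "A = (\<integral>\<^sup>+g. ennreal (cmod (F g)) \<partial>(lborel::grp measure))"
  define X where "X = (\<integral>\<^sup>+v. ennreal ((cmod (\<xi> v))\<^sup>2) \<partial>lborel)"
  have FK: "(\<lambda>(u, g). F g * pi_act \<rho> lam g \<xi> u) \<in> borel_measurable (lborel \<Otimes>\<^sub>M lborel)"
    and K: "(\<lambda>(u, g). pi_act \<rho> lam g \<xi> u) \<in> borel_measurable (lborel \<Otimes>\<^sub>M lborel)"
    using pi_act_integrand_measurable[OF \<xi>, of F] pi_act_integrand_measurable[OF \<xi>, of "\<lambda>_. 1"] F
    by simp_all
  have FK2: "(\<lambda>(u, g). ennreal (cmod (F g) * (cmod (pi_act \<rho> lam g \<xi> u))\<^sup>2))
      \<in> borel_measurable (lborel \<Otimes>\<^sub>M lborel)"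
    using FK K by measurable
  have "(\<integral>\<^sup>+u. (\<integral>\<^sup>+g. ennreal (cmod (F g * pi_act \<rho> lam g \<xi> u)) \<partial>lborel)\<^sup>2 \<partial>lborel)
      \<le> (\<integral>\<^sup>+u. A * (\<integral>\<^sup>+g. ennreal (cmod (F g) * (cmod (pi_act \<rho> lam g \<xi> u))\<^sup>2) \<partial>lborel) \<partial>lborel)"
    unfolding A_def by (intro nn_integral_mono nn_integral_pi_act_Cauchy_Schwarz \<xi> F)
  also have "\<dots> = A * (\<integral>\<^sup>+u. (\<integral>\<^sup>+g. ennreal (cmod (F g) * (cmod (pi_act \<rho> lam g \<xi> u))\<^sup>2) \<partial>lborel) \<partial>lborel)"
    by (rule nn_integral_cmult) (rule lborel.borel_measurable_nn_integral[OF FK2])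
  also have "\<dots> = A * (\<integral>\<^sup>+g. (\<integral>\<^sup>+u. ennreal (cmod (F g) * (cmod (pi_act \<rho> lam g \<xi> u))\<^sup>2) \<partial>lborel) \<partial>lborel)"
    by (simp only: lborel_pair.Fubini'[OF FK2])
  also have "\<dots> = A * (\<integral>\<^sup>+g. ennreal (cmod (F g)) * X \<partial>lborel)"
  proof -
    have "(\<lambda>u. pi_act \<rho> lam g \<xi> u) \<in> borel_measurable lborel" for g
      using measurable_Pair1[OF K, of g] by simp
    then have "(\<lambda>u. ennreal ((cmod (pi_act \<rho> lam g \<xi> u))\<^sup>2)) \<in> borel_measurable lborel" for g
      by measurable
    then show ?thesis
      by (simp add: ennreal_mult nn_integral_cmult nn_integral_norm_pi_act_square[OF \<xi>] X_def)
  qed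
  also have "\<dots> = A\<^sup>2 * X"
    by (simp add: nn_integral_multc A_def power2_eq_square mult.assoc)
  finally show ?thesis by (simp add: A_def X_def)
qed

lemma mixed_norm_pi_act_integrand_le_L1_norm:
  assumes "integrable lborel F" and "square_integrable \<xi>"
  shows "(\<integral>\<^sup>+u. (\<integral>\<^sup>+g. ennreal (cmod (F g * pi_act \<rho> lam g \<xi> u)) \<partial>lborel)\<^sup>2 \<partial>lborel)
     \<le> ennreal ((L1_norm F * l2norm \<xi>)\<^sup>2)"
  using mixed_norm_pi_act_integrand_le[of \<xi> F \<rho> lam] assms
  by (simp add: square_integrable_def nn_integral_norm_eq_L1_norm nn_integral_square_eq_l2norm
      ennreal_power ennreal_mult power_mult_distrib L1_norm_nonneg)

lemma AE_integrable_pi_act: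
  assumes F: "integrable lborel F" and \<xi>: "square_integrable \<xi>"
  shows "AE u in lborel. integrable lborel (\<lambda>g. F g * pi_act \<rho> lam g \<xi> u)"
proof -
  define I where "I u = (\<integral>\<^sup>+g. ennreal (cmod (F g * pi_act \<rho> lam g \<xi> u)) \<partial>lborel)" for u
  have FK: "(\<lambda>(u, g). F g * pi_act \<rho> lam g \<xi> u) \<in> borel_measurable (lborel \<Otimes>\<^sub>M lborel)"
    using pi_act_integrand_measurable F \<xi> by (simp add: square_integrable_def)
  have "(\<lambda>(u, g). ennreal (cmod (F g * pi_act \<rho> lam g \<xi> u))) \<in> borel_measurable (lborel \<Otimes>\<^sub>M lborel)"
    using FK by measurable
  then have "I \<in> borel_measurable lborel"
    unfolding I_def by (rule lborel.borel_measurable_nn_integral)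
  then have "(\<lambda>u. (I u)\<^sup>2) \<in> borel_measurable lborel"
    by measurable
  moreover have "(\<integral>\<^sup>+u. (I u)\<^sup>2 \<partial>lborel) \<noteq> \<infinity>"
    using mixed_norm_pi_act_integrand_le_L1_norm[OF F \<xi>, of \<rho> lam] by (auto simp: I_def top_unique)
  ultimately have "AE u in lborel. (I u)\<^sup>2 \<noteq> \<infinity>"
    by (rule nn_integral_PInf_AE)
  then show ?thesis
  proof eventually_elim
    case (elim u)
    show ?case
    proof (rule integrableI_bounded)
      show "(\<lambda>g. F g * pi_act \<rho> lam g \<xi> u) \<in> borel_measurable lborel"
        using measurable_Pair2[OF FK, of u] by simp
      show "(\<integral>\<^sup>+g. ennreal (norm (F g * pi_act \<rho> lam g \<xi> u)) \<partial>lborel) < \<infinity>"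
        using elim by (simp add: I_def power_eq_top_ennreal top.not_eq_extremum)
    qed
  qed
qed

lemma norm_pi_op_le:
  "ennreal (cmod (pi_op \<rho> lam F \<xi> u)) \<le> (\<integral>\<^sup>+g. ennreal (cmod (F g * pi_act \<rho> lam g \<xi> u)) \<partial>lborel)"
proof (cases "integrable lborel (\<lambda>g. F g * pi_act \<rho> lam g \<xi> u)")
  case True
  then show ?thesis unfolding pi_op_def by (rule integral_norm_bound_ennreal)
qed (simp add: pi_op_def not_integrable_integral_eq)

lemma pi_op_measurable:
  assumes "\<xi> \<in> borel_measurable borel" "F \<in> borel_measurable borel"
  shows "pi_op \<rho> lam F \<xi> \<in> borel_measurable lborel"
  unfolding pi_op_def[abs_def]
  using lborel.borel_measurable_lebesgue_integral[OF pi_act_integrand_measurable[OF assms]] by simp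

lemma nn_integral_norm_pi_op_square_le:
  assumes "integrable lborel F" and "square_integrable \<xi>"
  shows "(\<integral>\<^sup>+u. ennreal ((cmod (pi_op \<rho> lam F \<xi> u))\<^sup>2) \<partial>lborel)
    \<le> ennreal ((L1_norm F * l2norm \<xi>)\<^sup>2)"
proof -
  have "ennreal ((cmod (pi_op \<rho> lam F \<xi> u))\<^sup>2)
      \<le> (\<integral>\<^sup>+g. ennreal (cmod (F g * pi_act \<rho> lam g \<xi> u)) \<partial>lborel)\<^sup>2" for u
    using power_mono[OF norm_pi_op_le[of \<rho> lam F \<xi> u] zero_le, of 2] by (simp add: ennreal_power)
  then have "(\<integral>\<^sup>+u. ennreal ((cmod (pi_op \<rho> lam F \<xi> u))\<^sup>2) \<partial>lborel)
      \<le> (\<integral>\<^sup>+u. (\<integral>\<^sup>+g. ennreal (cmod (F g * pi_act \<rho> lam g \<xi> u)) \<partial>lborel)\<^sup>2 \<partial>lborel)"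
    by (rule nn_integral_mono)
  also have "\<dots> \<le> ennreal ((L1_norm F * l2norm \<xi>)\<^sup>2)"
    by (rule mixed_norm_pi_act_integrand_le_L1_norm[OF assms])
  finally show ?thesis .
qed

lemma square_integrable_pi_op:
  assumes "integrable lborel F" and "square_integrable \<xi>"
  shows "square_integrable (pi_op \<rho> lam F \<xi>)"
proof -
  have m: "pi_op \<rho> lam F \<xi> \<in> borel_measurable lborel"
    using pi_op_measurable assms by (simp add: square_integrable_def)
  have "integrable lborel (\<lambda>u. (cmod (pi_op \<rho> lam F \<xi> u))\<^sup>2)"
  proof (rule integrableI_bounded)
    show "(\<lambda>u. (cmod (pi_op \<rho> lam F \<xi> u))\<^sup>2) \<in> borel_measurable lborel"
      using measurable_compose[OF m borel_measurable_norm] by (rule borel_measurable_power)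
    show "(\<integral>\<^sup>+u. ennreal (norm ((cmod (pi_op \<rho> lam F \<xi> u))\<^sup>2)) \<partial>lborel) < \<infinity>"
      using nn_integral_norm_pi_op_square_le[OF assms, of \<rho> lam] by (simp add: le_less_trans)
  qed
  with m show ?thesis by (simp add: square_integrable_def)
qed

lemma l2norm_pi_op_le:
  assumes "integrable lborel F" and "square_integrable \<xi>"
  shows "l2norm (pi_op \<rho> lam F \<xi>) \<le> L1_norm F * l2norm \<xi>"
proof (rule power2_le_imp_le)
  have "ennreal ((l2norm (pi_op \<rho> lam F \<xi>))\<^sup>2) \<le> ennreal ((L1_norm F * l2norm \<xi>)\<^sup>2)"
    using nn_integral_norm_pi_op_square_le[OF assms, of \<rho> lam]
    unfolding nn_integral_square_eq_l2norm[OF square_integrable_pi_op[OF assms]] .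
  then show "(l2norm (pi_op \<rho> lam F \<xi>))\<^sup>2 \<le> (L1_norm F * l2norm \<xi>)\<^sup>2"
    by (rule ennreal_le_iff[THEN iffD1, rotated]) simp
  show "0 \<le> L1_norm F * l2norm \<xi>"
    by (simp add: L1_norm_nonneg l2norm_nonneg)
qed

lemma pi_op_diff_AE:
  assumes "integrable lborel F" "integrable lborel H" "square_integrable \<xi>"
  shows "AE u in lborel. pi_op \<rho> lam (\<lambda>g. F g - H g) \<xi> u = pi_op \<rho> lam F \<xi> u - pi_op \<rho> lam H \<xi> u"
  using AE_integrable_pi_act[OF assms(1,3), of \<rho> lam] AE_integrable_pi_act[OF assms(2,3), of \<rho> lam]
  by eventually_elim (simp add: pi_op_def left_diff_distrib)

section \<open>Continuity in \<rho>\<close>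

lemma integrable_mult_cis:
  fixes F :: "'a \<Rightarrow> complex"
  assumes "integrable M F" "\<theta> \<in> borel_measurable M"
  shows "integrable M (\<lambda>x. F x * cis (\<theta> x))"
proof (rule Bochner_Integration.integrable_bound[OF assms(1)])
  have "cis \<in> borel_measurable borel"
    by (intro borel_measurable_continuous_onI continuous_intros)
  then show "(\<lambda>x. F x * cis (\<theta> x)) \<in> borel_measurable M"
    using assms by (intro borel_measurable_times measurable_compose[OF assms(2)]) auto
qed (simp add: norm_mult)

lemma square_integrable_pi_op_rho_diff:
  "integrable lborel F \<Longrightarrow> square_integrable \<xi> \<Longrightarrow>
    square_integrable (\<lambda>u. pi_op \<rho> lam F \<xi> u - pi_op 0 lam F \<xi> u)"
  by (intro square_integrable_diff square_integrable_pi_op)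

lemma l2norm_pi_op_rho_diff_le:
  assumes F: "integrable lborel F" and \<xi>: "square_integrable \<xi>"
  shows "l2norm (\<lambda>u. pi_op \<rho> lam F \<xi> u - pi_op 0 lam F \<xi> u)
    \<le> L1_norm (\<lambda>g. F g * cis (- \<rho> * fst g) - F g) * l2norm \<xi>"
proof -
  define H where "H g = F g * cis (- \<rho> * fst g)" for g
  have "(\<lambda>g::grp. - \<rho> * fst g) \<in> borel_measurable lborel"
    unfolding measurable_lborel2 by (intro borel_measurable_continuous_onI continuous_intros)
  then have H: "integrable lborel H"
    unfolding H_def using F by (rule integrable_mult_cis[rotated])
  have "AE u in lborel. pi_op \<rho> lam F \<xi> u - pi_op 0 lam F \<xi> u = pi_op 0 lam (\<lambda>g. H g - F g) \<xi> u"
    using pi_op_diff_AE[OF H F \<xi>, of 0 lam] by eventually_elim (simp add: pi_op_twist[of \<rho>] H_def[abs_def])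
  then have "l2norm (\<lambda>u. pi_op \<rho> lam F \<xi> u - pi_op 0 lam F \<xi> u) = l2norm (pi_op 0 lam (\<lambda>g. H g - F g) \<xi>)"
    using H F \<xi> by (intro l2norm_cong_AE square_integrable_pi_op_rho_diff square_integrable_pi_op) auto
  also have "\<dots> \<le> L1_norm (\<lambda>g. H g - F g) * l2norm \<xi>"
    using H F \<xi> by (intro l2norm_pi_op_le) auto
  finally show ?thesis by (simp add: H_def)
qed

lemma l2norm_pi_op_rho_diff_triangle:
  assumes F: "integrable lborel F" and H: "integrable lborel H" and \<xi>: "square_integrable \<xi>"
  shows "l2norm (\<lambda>u. pi_op \<rho> lam F \<xi> u - pi_op 0 lam F \<xi> u)
    \<le> l2norm (\<lambda>u. pi_op \<rho> lam H \<xi> u - pi_op 0 lam H \<xi> u)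
      + l2norm (pi_op \<rho> lam (\<lambda>g. F g - H g) \<xi>) + l2norm (pi_op 0 lam (\<lambda>g. F g - H g) \<xi>)"
proof -
  define D where "D = (\<lambda>u. pi_op \<rho> lam H \<xi> u - pi_op 0 lam H \<xi> u)"
  define P where "P = pi_op \<rho> lam (\<lambda>g. F g - H g) \<xi>"
  define Q where "Q = pi_op 0 lam (\<lambda>g. F g - H g) \<xi>"
  have FH: "integrable lborel (\<lambda>g. F g - H g)"
    using F H by simp
  have si: "square_integrable D" "square_integrable P" "square_integrable Q"
    unfolding D_def P_def Q_def using H FH \<xi>
    by (auto intro: square_integrable_pi_op_rho_diff square_integrable_pi_op)
  have "AE u in lborel. pi_op \<rho> lam F \<xi> u - pi_op 0 lam F \<xi> u = D u + (P u - Q u)"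
    using pi_op_diff_AE[OF F H \<xi>, of \<rho> lam] pi_op_diff_AE[OF F H \<xi>, of 0 lam]
    by eventually_elim (simp add: D_def P_def Q_def)
  then have "l2norm (\<lambda>u. pi_op \<rho> lam F \<xi> u - pi_op 0 lam F \<xi> u) = l2norm (\<lambda>u. D u + (P u - Q u))"
    using si F \<xi>
    by (intro l2norm_cong_AE square_integrable_pi_op_rho_diff square_integrable_add square_integrable_diff)
  also have "\<dots> \<le> l2norm D + l2norm (\<lambda>u. P u - Q u)"
    using si by (intro l2norm_add_le square_integrable_diff)
  also have "\<dots> \<le> l2norm D + l2norm P + l2norm Q"
    using l2norm_diff_le[OF si(2,3)] by simp
  finally show ?thesis by (simp add: D_def P_def Q_def)
qed

lemma op_norm_pi_op_rho_diff_le: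
  assumes "integrable lborel F"
  shows "op_norm (\<lambda>\<xi> u. pi_op \<rho> lam F \<xi> u - pi_op 0 lam F \<xi> u)
    \<le> L1_norm (\<lambda>g. F g * cis (- \<rho> * fst g) - F g)"
proof (rule op_norm_le)
  fix \<xi> :: "real \<Rightarrow> complex"
  assume "square_integrable \<xi>" "l2norm \<xi> \<le> 1"
  then show "l2norm (\<lambda>u. pi_op \<rho> lam F \<xi> u - pi_op 0 lam F \<xi> u) \<le> L1_norm (\<lambda>g. F g * cis (- \<rho> * fst g) - F g)"
    using l2norm_pi_op_rho_diff_le[OF assms] mult_left_le[OF _ L1_norm_nonneg] order_trans by blast
qed

lemma op_norm_pi_op_rho_diff_nonneg:
  "integrable lborel F \<Longrightarrow> 0 \<le> op_norm (\<lambda>\<xi> u. pi_op \<rho> lam F \<xi> u - pi_op 0 lam F \<xi> u)"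
  by (rule op_norm_nonneg) (rule l2norm_pi_op_rho_diff_le)

lemma op_norm_pi_op_rho_diff_triangle:
  assumes F: "integrable lborel F" and H: "integrable lborel H"
  shows "op_norm (\<lambda>\<xi> u. pi_op \<rho> lam F \<xi> u - pi_op 0 lam F \<xi> u)
    \<le> op_norm (\<lambda>\<xi> u. pi_op \<rho> lam H \<xi> u - pi_op 0 lam H \<xi> u)
      + op_norm (pi_op \<rho> lam (\<lambda>g. F g - H g)) + op_norm (pi_op 0 lam (\<lambda>g. F g - H g))"
proof (rule op_norm_le)
  fix \<xi> :: "real \<Rightarrow> complex"
  assume \<xi>: "square_integrable \<xi>" "l2norm \<xi> \<le> 1"
  have FH: "integrable lborel (\<lambda>g. F g - H g)"
    using F H by simp
  show "l2norm (\<lambda>u. pi_op \<rho> lam F \<xi> u - pi_op 0 lam F \<xi> u)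
    \<le> op_norm (\<lambda>\<xi> u. pi_op \<rho> lam H \<xi> u - pi_op 0 lam H \<xi> u)
      + op_norm (pi_op \<rho> lam (\<lambda>g. F g - H g)) + op_norm (pi_op 0 lam (\<lambda>g. F g - H g))"
    using l2norm_pi_op_rho_diff_triangle[OF F H \<xi>(1), of \<rho> lam]
      l2norm_le_op_norm[OF l2norm_pi_op_rho_diff_le[OF H, where \<rho> = \<rho> and lam = lam] \<xi>]
      l2norm_le_op_norm[OF l2norm_pi_op_le[OF FH, where \<rho> = \<rho> and lam = lam] \<xi>]
      l2norm_le_op_norm[OF l2norm_pi_op_le[OF FH, where \<rho> = 0 and lam = lam] \<xi>]
    by linarith
qed

lemma tendsto_integral_norm_mult_cis_diff:
  fixes F :: "'a \<Rightarrow> complex"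
  assumes F: "integrable M F" and \<theta>: "\<theta> \<in> borel_measurable M" and "\<rho>s \<longlonglongrightarrow> 0"
  shows "(\<lambda>k. \<integral>x. cmod (F x * cis (\<rho>s k * \<theta> x) - F x) \<partial>M) \<longlonglongrightarrow> 0"
proof -
  have "(\<lambda>k. \<integral>x. cmod (F x * cis (\<rho>s k * \<theta> x) - F x) \<partial>M) \<longlonglongrightarrow> (\<integral>x. 0 \<partial>M)"
  proof (rule integral_dominated_convergence[where w = "\<lambda>x. 2 * cmod (F x)"])
    show "(\<lambda>x. cmod (F x * cis (\<rho>s k * \<theta> x) - F x)) \<in> borel_measurable M" for k
      using integrable_mult_cis[OF F, of "\<lambda>x. \<rho>s k * \<theta> x"] F \<theta> by measurable
    show "AE x in M. (\<lambda>k. cmod (F x * cis (\<rho>s k * \<theta> x) - F x)) \<longlonglongrightarrow> 0"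
      by (auto intro!: tendsto_eq_intros \<open>\<rho>s \<longlonglongrightarrow> 0\<close>)
    show "AE x in M. norm (cmod (F x * cis (\<rho>s k * \<theta> x) - F x)) \<le> 2 * cmod (F x)" for k
      using norm_triangle_ineq4[of "F x * cis (\<rho>s k * \<theta> x)" "F x" for x] by (simp add: norm_mult)
  qed (use F in auto)
  then show ?thesis by simp
qed

lemma tendsto_op_norm_pi_op_rho_diff:
  assumes F: "integrable lborel F" and "\<rho>s \<longlonglongrightarrow> 0"
  shows "(\<lambda>k. op_norm (\<lambda>\<xi> u. pi_op (\<rho>s k) (lams k) F \<xi> u - pi_op 0 (lams k) F \<xi> u)) \<longlonglongrightarrow> 0"
proof (rule tendsto_sandwich[where f = "\<lambda>_. 0"])
  have "(\<lambda>g::grp. fst g) \<in> borel_measurable lborel"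
    unfolding measurable_lborel2 by (intro borel_measurable_continuous_onI continuous_intros)
  moreover have "(\<lambda>k. - \<rho>s k) \<longlonglongrightarrow> 0"
    using tendsto_minus[OF \<open>\<rho>s \<longlonglongrightarrow> 0\<close>] by simp
  ultimately show "(\<lambda>k. L1_norm (\<lambda>g. F g * cis (- \<rho>s k * fst g) - F g)) \<longlonglongrightarrow> 0"
    unfolding L1_norm_def by (rule tendsto_integral_norm_mult_cis_diff[OF F])
qed (use op_norm_pi_op_rho_diff_nonneg[OF F] op_norm_pi_op_rho_diff_le[OF F] in auto)

section \<open>Exchanging the limits\<close>

lemma tendsto_lim_of_uniformly_Cauchy:
  fixes a :: "nat \<Rightarrow> nat \<Rightarrow> 'a::complete_space"
  assumes "uniformly_Cauchy_on UNIV (\<lambda>n k. a k n)" and "\<And>n. (\<lambda>k. a k n) \<longlonglongrightarrow> l"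
  shows "(\<lambda>k. lim (a k)) \<longlonglongrightarrow> l"
proof (rule swap_uniform_limit'[where g = "\<lambda>_. l"])
  show "uniform_limit UNIV (\<lambda>n k. a k n) (\<lambda>k. lim (a k)) sequentially"
    using assms(1) by (simp add: uniformly_convergent_uniform_limit_iff[symmetric] uniformly_convergent_eq_Cauchy)
qed (use assms(2) in simp_all)

lemma uniformly_Cauchy_op_norm_pi_op_rho_diff:
  assumes Fs: "\<And>n. integrable lborel (Fs n)" and "\<And>k. lams k \<noteq> 0"
    and Cauchy: "\<forall>\<epsilon>>0. \<exists>N. \<forall>m\<ge>N. \<forall>n\<ge>N. \<forall>\<rho> lam. lam \<noteq> 0 \<longrightarrow>
           op_norm (pi_op \<rho> lam (\<lambda>g. Fs m g - Fs n g)) < \<epsilon>"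
  shows "uniformly_Cauchy_on UNIV
    (\<lambda>n k. op_norm (\<lambda>\<xi> u. pi_op (\<rho>s k) (lams k) (Fs n) \<xi> u - pi_op 0 (lams k) (Fs n) \<xi> u))"
proof (rule uniformly_Cauchy_onI)
  fix e :: real
  assume "0 < e"
  then obtain N where N: "\<And>m n \<rho> lam. m \<ge> N \<Longrightarrow> n \<ge> N \<Longrightarrow> lam \<noteq> 0 \<Longrightarrow>
      op_norm (pi_op \<rho> lam (\<lambda>g. Fs m g - Fs n g)) < e / 2"
    using Cauchy half_gt_zero by meson
  define a where "a k n = op_norm (\<lambda>\<xi> u. pi_op (\<rho>s k) (lams k) (Fs n) \<xi> u - pi_op 0 (lams k) (Fs n) \<xi> u)" for k n
  have less: "a k m < a k n + e" if "m \<ge> N" "n \<ge> N" for k m n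
    using op_norm_pi_op_rho_diff_triangle[OF Fs Fs, of "\<rho>s k" "lams k" m n]
      N[OF that \<open>lams k \<noteq> 0\<close>, of "\<rho>s k"] N[OF that \<open>lams k \<noteq> 0\<close>, of 0]
    unfolding a_def by linarith
  have "dist (a k m) (a k n) < e" if "m \<ge> N" "n \<ge> N" for k m n
    using less[OF that, of k] less[OF that(2,1), of k] by (simp add: dist_real_def abs_less_iff)
  then show "\<exists>M. \<forall>k\<in>UNIV. \<forall>m\<ge>M. \<forall>n\<ge>M.
      dist (op_norm (\<lambda>\<xi> u. pi_op (\<rho>s k) (lams k) (Fs m) \<xi> u - pi_op 0 (lams k) (Fs m) \<xi> u))
           (op_norm (\<lambda>\<xi> u. pi_op (\<rho>s k) (lams k) (Fs n) \<xi> u - pi_op 0 (lams k) (Fs n) \<xi> u)) < e"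
    unfolding a_def by blast
qed

theorem lemma4p8:
  fixes \<rho>s lams :: "nat \<Rightarrow> real" and Fs :: "nat \<Rightarrow> grp \<Rightarrow> complex"
  assumes "\<rho>s \<longlonglongrightarrow> 0"
    and "\<And>k. lams k \<noteq> 0"
    and "\<And>n. integrable lborel (Fs n)"
    and "\<forall>\<epsilon>>0. \<exists>N. \<forall>m\<ge>N. \<forall>n\<ge>N. \<forall>\<rho> lam. lam \<noteq> 0 \<longrightarrow>
           op_norm (pi_op \<rho> lam (\<lambda>g. Fs m g - Fs n g)) < \<epsilon>"
  shows "(\<lambda>k. lim (\<lambda>n. op_norm (\<lambda>\<xi> u. pi_op (\<rho>s k) (lams k) (Fs n) \<xi> u
                                      - pi_op 0 (lams k) (Fs n) \<xi> u))) \<longlonglongrightarrow> 0"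
proof (rule tendsto_lim_of_uniformly_Cauchy)
  show "uniformly_Cauchy_on UNIV
    (\<lambda>n k. op_norm (\<lambda>\<xi> u. pi_op (\<rho>s k) (lams k) (Fs n) \<xi> u - pi_op 0 (lams k) (Fs n) \<xi> u))"
    using assms(3,2,4) by (rule uniformly_Cauchy_op_norm_pi_op_rho_diff)
  show "(\<lambda>k. op_norm (\<lambda>\<xi> u. pi_op (\<rho>s k) (lams k) (Fs n) \<xi> u - pi_op 0 (lams k) (Fs n) \<xi> u))
    \<longlonglongrightarrow> 0" for n
    using assms(3,1) by (rule tendsto_op_norm_pi_op_rho_diff)
qed

end
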